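(* Let $(X,d,m)$ be a metric measure space with a metric measure foliation, with quotient $(X^*,d^*,m^* )$, quotient map $p$, and canonical disintegration $\{\mu_y\}_{y\in X^*}$. For $\nu\in\mathcal P(X^* )$ define $p^*\nu\in\mathcal P(X)$ by $p^*\nu(A)=\int_{X^*}\mu_y(A)\,d\nu(y)$ for Borel $A\subset X$. Then for every $\nu\in\mathcal P(X^* )$: (1) $p_*(p^*\nu)=\nu$; (2) if $\nu=\rho m^*$ for a Borel function $\rho$, then $p^*\nu=(\rho\circ p)m$; (3) if $\nu$ is absolutely continuous with respect to $m^*$, then $\mathrm{Ent}_{m^*}(\nu)=\mathrm{Ent}_m(p^*\nu)$.
   Context: A metric measure space $(X,d,m)$: complete separable metric space with Borel measure satisfying $0<m(B_r(x))<\infty$ for all $x$, $r>0$. A metric foliation is a family $\mathcal F$ of pairwise disjoint closed sets covering $X$ with $d(F,F')=d(x,F')$ for $F,F'\in\mathcal F$, $x\in F$; quotient $X^*$, quotient map $p$, $d^*(y,y')=d(p^{-1}(y),p^{-1}(y'))$, $m^*=p_*m$. With $\{\mu_y\}$ a disintegration of $m$ for $p$, $\mathcal F$ is a metric measure foliation if $m^*$ is locally finite and there is Borel $\Omega$ of full $m^*$-measure with $W_2(\mu_y,\mu_{y'})=d^*(y,y')$ for $y,y'\in\Omega$. The canonical disintegration is a version with $p_*\mu_y=\delta_y$ and $W_2(\mu_y,\mu_{y'})=d^*(y,y')$ for all $y,y'\in X^*$. $\mathcal P(\cdot)$ denotes Borel probability measures. Relative entropy: $\mathrm{Ent}_m(\mu)=\lim_{\varepsilon\downarrow0}\int_{\{\rho>\varepsilon\}}\rho\log\rho\,dm$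 if $\mu=\rho m$, $+\infty$ otherwise. *)

theory Defs
  imports "HOL-Probability.Probability"
begin

text \<open>Metric measure space: complete separable metric space (type class polish_space),
  Borel measure with 0 < m(B_r(x)) < infinity.\<close>
definition mm_space :: "'a::metric_space measure \<Rightarrow> bool" where
  "mm_space m \<longleftrightarrow> sets m = sets borel \<and>
     (\<forall>x r. r > 0 \<longrightarrow> 0 < emeasure m (ball x r) \<and> emeasure m (ball x r) < \<infinity>)"

text \<open>Metric foliation, with the quotient space modelled by a metric space type 'b and the
  quotient map p: the leaves are the fibres of p, every point lies in a leaf (p surjective onto X*),
  and d*(p x, p y) = d(x, leaf of y). The latter encodes simultaneously the equidistance property
  d(F,F') = d(x,F') for x in F and the quotient metric d*(F,F') = d(F,F').\<close>
definition metric_foliation_quotient :: "('a::metric_space \<Rightarrow> 'b::metric_space) \<Rightarrow> bool" where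
  "metric_foliation_quotient p \<longleftrightarrow> surj p \<and>
     (\<forall>y. closed (p -` {y})) \<and>
     (\<forall>x y. dist (p x) (p y) = infdist x (p -` {p y}))"

definition quotient_measure :: "'a::topological_space measure \<Rightarrow> ('a \<Rightarrow> 'b::topological_space) \<Rightarrow> 'b measure" where
  "quotient_measure m p = distr m borel p"

definition locally_finite_measure :: "'b::metric_space measure \<Rightarrow> bool" where
  "locally_finite_measure M \<longleftrightarrow> (\<forall>y. \<exists>r>0. emeasure M (ball y r) < \<infinity>)"

definition borel_prob :: "'a::topological_space measure \<Rightarrow> bool" where
  "borel_prob \<mu> \<longleftrightarrow> prob_space \<mu> \<and> sets \<mu> = sets borel"

definition disintegration ::
  "'a::topological_space measure \<Rightarrow> ('a \<Rightarrow> 'b::topological_space) \<Rightarrow> ('b \<Rightarrow> 'a measure) \<Rightarrow> bool" where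
  "disintegration m p \<mu> \<longleftrightarrow> (\<forall>y. borel_prob (\<mu> y)) \<and>
     (\<forall>A\<in>sets borel. (\<lambda>y. emeasure (\<mu> y) A) \<in> borel_measurable borel \<and>
        emeasure m A = (\<integral>\<^sup>+ y. emeasure (\<mu> y) A \<partial>(quotient_measure m p)))"

definition couplings :: "'a::topological_space measure \<Rightarrow> 'a measure \<Rightarrow> ('a \<times> 'a) measure set" where
  "couplings \<mu> \<nu> = {\<pi>. borel_prob \<pi> \<and> distr \<pi> borel fst = \<mu> \<and> distr \<pi> borel snd = \<nu>}"

definition wasserstein2 :: "'a::metric_space measure \<Rightarrow> 'a measure \<Rightarrow> ennreal" where
  "wasserstein2 \<mu> \<nu> =
     (let c = (INF \<pi>\<in>couplings \<mu> \<nu>. \<integral>\<^sup>+ z. ennreal ((dist (fst z) (snd z))\<^sup>2) \<partial>\<pi>)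
      in if c = \<infinity> then \<infinity> else ennreal (sqrt (enn2real c)))"

definition metric_measure_foliation :: "'a::metric_space measure \<Rightarrow> ('a \<Rightarrow> 'b::metric_space) \<Rightarrow> bool" where
  "metric_measure_foliation m p \<longleftrightarrow> metric_foliation_quotient p \<and>
     locally_finite_measure (quotient_measure m p) \<and>
     (\<exists>\<mu>. disintegration m p \<mu> \<and>
        (\<exists>\<Omega>\<in>sets borel. (AE y in quotient_measure m p. y \<in> \<Omega>) \<and>
           (\<forall>y\<in>\<Omega>. \<forall>y'\<in>\<Omega>. wasserstein2 (\<mu> y) (\<mu> y') = ennreal (dist y y'))))"

definition canonical_disintegration ::
  "'a::metric_space measure \<Rightarrow> ('a \<Rightarrow> 'b::metric_space) \<Rightarrow> ('b \<Rightarrow> 'a measure) \<Rightarrow> bool" where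
  "canonical_disintegration m p \<mu> \<longleftrightarrow> disintegration m p \<mu> \<and>
     (\<forall>y. distr (\<mu> y) borel p = return borel y) \<and>
     (\<forall>y y'. wasserstein2 (\<mu> y) (\<mu> y') = ennreal (dist y y'))"

definition pullback :: "('b \<Rightarrow> 'a::topological_space measure) \<Rightarrow> 'b measure \<Rightarrow> 'a measure" where
  "pullback \<mu> \<nu> = measure_of UNIV (sets borel) (\<lambda>A. \<integral>\<^sup>+ y. emeasure (\<mu> y) A \<partial>\<nu>)"

text \<open>The integral over {rho > eps} is written as (positive part) - (negative part), as an extended real.\<close>
definition ent_trunc :: "'a measure \<Rightarrow> ('a \<Rightarrow> real) \<Rightarrow> real \<Rightarrow> ereal" where
  "ent_trunc m \<rho> \<epsilon> =
     enn2ereal (\<integral>\<^sup>+ x. ennreal (indicator {x. \<rho> x > \<epsilon>} x * max 0 (\<rho> x * ln (\<rho> x))) \<partial>m)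
   - enn2ereal (\<integral>\<^sup>+ x. ennreal (indicator {x. \<rho> x > \<epsilon>} x * max 0 (- (\<rho> x * ln (\<rho> x)))) \<partial>m)"

definition is_density_of :: "'a measure \<Rightarrow> 'a measure \<Rightarrow> ('a \<Rightarrow> real) \<Rightarrow> bool" where
  "is_density_of m \<mu> \<rho> \<longleftrightarrow> \<rho> \<in> borel_measurable m \<and> (\<forall>x. 0 \<le> \<rho> x) \<and>
     \<mu> = density m (\<lambda>x. ennreal (\<rho> x))"

definition rel_entropy :: "'a measure \<Rightarrow> 'a measure \<Rightarrow> ereal" where
  "rel_entropy m \<mu> =
     (if \<exists>\<rho>. is_density_of m \<mu> \<rho>
      then Lim (at_right 0) (ent_trunc m (SOME \<rho>. is_density_of m \<mu> \<rho>))
      else \<infinity>)"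

end

theory Submission
  imports Defs
begin

text \<open>The pull-back is the composition \<open>bind \<nu> \<mu>\<close> of \<open>\<nu>\<close> with the Markov kernel \<open>\<mu>\<close>.
  Since \<open>\<mu>\<^sub>y\<close> is concentrated on the leaf \<open>p\<^sup>-\<^sup>1(y)\<close>, the kernel sends the indicator of
  \<open>p\<^sup>-\<^sup>1(B)\<close> to the indicator of \<open>B\<close> and multiplies any function of the form \<open>\<rho> \<circ> p\<close> by \<open>\<rho>\<close>;
  together with \<open>m = bind m\<^sup>* \<mu>\<close> this gives \<open>p\<^sub>*(p\<^sup>*\<nu>) = \<nu>\<close> and \<open>p\<^sup>*(\<rho> m\<^sup>*) = (\<rho> \<circ> p) m\<close>.
  The entropy identity follows because \<open>\<rho> \<circ> p\<close> is then the density of \<open>p\<^sup>*\<nu>\<close>, densities are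
  unique up to null sets on the \<open>\<sigma>\<close>-finite spaces \<open>m\<close> and \<open>m\<^sup>*\<close>, and integrating a function of
  \<open>\<rho> \<circ> p\<close> against \<open>m\<close> is integrating the same function of \<open>\<rho>\<close> against \<open>m\<^sup>* = p\<^sub>*m\<close>.\<close>

lemma lipschitz_on_metric_foliation_quotient:
  assumes "metric_foliation_quotient p"
  shows "1-lipschitz_on UNIV p"
proof (rule lipschitz_onI)
  fix x y
  have "dist (p x) (p y) = infdist x (p -` {p y})"
    using assms unfolding metric_foliation_quotient_def by blast
  also have "\<dots> \<le> dist x y" by (rule infdist_le) simp
  finally show "dist (p x) (p y) \<le> 1 * dist x y" by simp
qed simp

lemma continuous_on_metric_foliation_quotient:
  "metric_foliation_quotient p \<Longrightarrow> continuous_on UNIV p"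
  by (rule lipschitz_on_continuous_on[OF lipschitz_on_metric_foliation_quotient])

lemma borel_measurable_metric_foliation_quotient:
  "metric_foliation_quotient p \<Longrightarrow> p \<in> borel_measurable borel"
  by (rule borel_measurable_continuous_onI[OF continuous_on_metric_foliation_quotient])

lemma sets_eq_borel_imp_space_UNIV: "sets M = sets borel \<Longrightarrow> space M = UNIV"
  using sets_eq_imp_space_eq by fastforce

lemma kernel_measurable_subprob_algebra:
  fixes \<mu> :: "'b::topological_space \<Rightarrow> 'a::topological_space measure"
  assumes "\<And>y. borel_prob (\<mu> y)"
    and "\<And>A. A \<in> sets borel \<Longrightarrow> (\<lambda>y. emeasure (\<mu> y) A) \<in> borel_measurable borel"
    and "sets M = sets borel"
  shows "\<mu> \<in> measurable M (subprob_algebra borel)"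
proof (rule measurable_subprob_algebra)
  fix y
  show "subprob_space (\<mu> y)" and "sets (\<mu> y) = sets borel"
    using assms(1)[of y] by (simp_all add: borel_prob_def prob_space_imp_subprob_space)
next
  fix A :: "'a set" assume "A \<in> sets borel"
  then show "(\<lambda>y. emeasure (\<mu> y) A) \<in> borel_measurable M"
    using assms(2) measurable_cong_sets[OF assms(3) refl] by blast
qed

lemma pullback_eq_bind:
  fixes \<mu> :: "'b::topological_space \<Rightarrow> 'a::topological_space measure"
  assumes "\<And>y. borel_prob (\<mu> y)"
    and "\<And>A. A \<in> sets borel \<Longrightarrow> (\<lambda>y. emeasure (\<mu> y) A) \<in> borel_measurable borel"
    and \<nu>: "sets \<nu> = sets borel"
  shows "pullback \<mu> \<nu> = bind \<nu> \<mu>"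
proof -
  have K: "\<mu> \<in> measurable \<nu> (subprob_algebra borel)"
    by (rule kernel_measurable_subprob_algebra[OF assms])
  have "sets (bind \<nu> \<mu>) = sets borel"
    by (rule sets_bind) (use assms(1) sets_eq_borel_imp_space_UNIV[OF \<nu>] in \<open>auto simp: borel_prob_def\<close>)
  then have "bind \<nu> \<mu> = measure_of UNIV (sets borel) (emeasure (bind \<nu> \<mu>))"
    by (metis measure_of_of_measure sets_eq_borel_imp_space_UNIV)
  also have "\<dots> = pullback \<mu> \<nu>"
    unfolding pullback_def
  proof (rule measure_of_eq)
    fix A :: "'a set" assume "A \<in> sigma_sets UNIV (sets borel)"
    then have A: "A \<in> sets borel"
      using sets.sigma_sets_eq[of "borel :: 'a measure"] by simp
    show "emeasure (bind \<nu> \<mu>) A = (\<integral>\<^sup>+ y. emeasure (\<mu> y) A \<partial>\<nu>)"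
      by (rule emeasure_bind[OF _ K A]) (simp add: sets_eq_borel_imp_space_UNIV[OF \<nu>])
  qed simp
  finally show ?thesis ..
qed

lemma disintegration_eq_bind:
  assumes "disintegration m p \<mu>" and m: "sets m = sets borel"
  shows "m = bind (quotient_measure m p) \<mu>"
proof -
  have "\<And>y. borel_prob (\<mu> y)"
    and "\<And>A. A \<in> sets borel \<Longrightarrow> (\<lambda>y. emeasure (\<mu> y) A) \<in> borel_measurable borel"
    and disint: "\<And>A. A \<in> sets borel \<Longrightarrow> emeasure m A = (\<integral>\<^sup>+ y. emeasure (\<mu> y) A \<partial>quotient_measure m p)"
    using assms(1) unfolding disintegration_def by auto
  moreover have "sets (quotient_measure m p) = sets borel"
    by (simp add: quotient_measure_def)
  ultimately have bind: "bind (quotient_measure m p) \<mu> = pullback \<mu> (quotient_measure m p)"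
    by (simp add: pullback_eq_bind)
  have "m = measure_of UNIV (sets borel) (emeasure m)"
    by (metis m measure_of_of_measure sets_eq_borel_imp_space_UNIV)
  also have "\<dots> = pullback \<mu> (quotient_measure m p)"
    unfolding pullback_def
    by (rule measure_of_eq) (use disint sets.sigma_sets_eq[of borel] in auto)
  finally show ?thesis by (simp add: bind)
qed

lemma emeasure_vimage_eq_indicator:
  assumes "p \<in> borel_measurable borel" and "sets M = sets borel"
    and "distr M borel p = return borel y" and "B \<in> sets borel"
  shows "emeasure M (p -` B) = indicator B y"
proof -
  have "p \<in> measurable M borel"
    using assms(1) measurable_cong_sets[OF assms(2) refl] by blast
  from emeasure_distr[OF this assms(4)]
  have "emeasure (distr M borel p) B = emeasure M (p -` B)"
    by (simp add: sets_eq_borel_imp_space_UNIV[OF assms(2)])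
  then show ?thesis
    using assms(3,4) by simp
qed

lemma AE_eq_if_distr_eq_return:
  fixes p :: "'a::topological_space \<Rightarrow> 'b::t1_space"
  assumes "p \<in> borel_measurable borel" and "sets M = sets borel"
    and "distr M borel p = return borel y"
  shows "AE x in M. p x = y"
proof (rule AE_I)
  show "{x \<in> space M. p x \<noteq> y} \<subseteq> p -` (- {y})" by auto
  show "emeasure M (p -` (- {y})) = 0"
    using emeasure_vimage_eq_indicator[OF assms, of "- {y}"] by (simp add: borel_open)
  show "p -` (- {y}) \<in> sets M"
    using assms(1,2) by (simp add: measurable_sets_borel)
qed

lemma emeasure_pullback:
  fixes \<mu> :: "'b::topological_space \<Rightarrow> 'a::topological_space measure"
  assumes "\<And>y. borel_prob (\<mu> y)"
    and "\<And>A. A \<in> sets borel \<Longrightarrow> (\<lambda>y. emeasure (\<mu> y) A) \<in> borel_measurable borel"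
    and \<nu>: "sets \<nu> = sets borel" and A: "A \<in> sets borel"
  shows "emeasure (pullback \<mu> \<nu>) A = (\<integral>\<^sup>+ y. emeasure (\<mu> y) A \<partial>\<nu>)"
proof -
  have "emeasure (bind \<nu> \<mu>) A = (\<integral>\<^sup>+ y. emeasure (\<mu> y) A \<partial>\<nu>)"
    by (rule emeasure_bind[OF _ kernel_measurable_subprob_algebra[OF assms(1,2) \<nu>] A])
       (simp add: sets_eq_borel_imp_space_UNIV[OF \<nu>])
  then show ?thesis
    by (simp add: pullback_eq_bind[OF assms(1,2) \<nu>])
qed

lemma sets_pullback: "sets (pullback \<mu> \<nu>) = sets borel"
  using sets.sigma_sets_eq[of borel] by (simp add: pullback_def)

context
  fixes \<mu> :: "'b::topological_space \<Rightarrow> 'a::topological_space measure" and \<nu> :: "'b measure"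
  assumes kernel_prob: "\<And>y. borel_prob (\<mu> y)"
    and kernel_measurable: "\<And>A. A \<in> sets borel \<Longrightarrow> (\<lambda>y. emeasure (\<mu> y) A) \<in> borel_measurable borel"
    and \<nu>_prob: "borel_prob \<nu>"
begin

lemma emeasure_pullback_prob:
  "A \<in> sets borel \<Longrightarrow> emeasure (pullback \<mu> \<nu>) A = (\<integral>\<^sup>+ y. emeasure (\<mu> y) A \<partial>\<nu>)"
  using \<nu>_prob by (intro emeasure_pullback[OF kernel_prob kernel_measurable]) (simp_all add: borel_prob_def)

lemma borel_prob_pullback: "borel_prob (pullback \<mu> \<nu>)"
  unfolding borel_prob_def
proof (intro conjI prob_spaceI sets_pullback)
  have "\<And>y. emeasure (\<mu> y) UNIV = 1"
    using kernel_prob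
    by (metis borel_prob_def prob_space.emeasure_space_1 sets_eq_borel_imp_space_UNIV)
  then have "emeasure (pullback \<mu> \<nu>) UNIV = (\<integral>\<^sup>+ y. 1 \<partial>\<nu>)"
    by (simp add: emeasure_pullback_prob)
  also have "\<dots> = 1"
    using \<nu>_prob by (metis borel_prob_def nn_integral_const mult_1 prob_space.emeasure_space_1
        sets_eq_borel_imp_space_UNIV)
  finally show "emeasure (pullback \<mu> \<nu>) (space (pullback \<mu> \<nu>)) = 1"
    by (simp add: sets_eq_borel_imp_space_UNIV[OF sets_pullback])
qed

lemma distr_pullback:
  assumes "p \<in> borel_measurable borel" and "\<And>y. distr (\<mu> y) borel p = return borel y"
  shows "distr (pullback \<mu> \<nu>) borel p = \<nu>"
proof (rule measure_eqI)
  show "sets (distr (pullback \<mu> \<nu>) borel p) = sets \<nu>"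
    using \<nu>_prob by (simp add: borel_prob_def)
  fix B assume "B \<in> sets (distr (pullback \<mu> \<nu>) borel p)"
  then have B: "B \<in> sets borel" by simp
  have "p \<in> measurable (pullback \<mu> \<nu>) borel"
    using assms(1) measurable_cong_sets[OF sets_pullback refl] by blast
  from emeasure_distr[OF this B]
  have "emeasure (distr (pullback \<mu> \<nu>) borel p) B = emeasure (pullback \<mu> \<nu>) (p -` B)"
    by (simp add: sets_eq_borel_imp_space_UNIV[OF sets_pullback])
  also have "\<dots> = (\<integral>\<^sup>+ y. indicator B y \<partial>\<nu>)"
  proof -
    have "\<And>y. emeasure (\<mu> y) (p -` B) = indicator B y"
      using kernel_prob assms B by (intro emeasure_vimage_eq_indicator) (simp_all add: borel_prob_def)
    moreover have "p -` B \<in> sets borel"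
      using assms(1) B by (rule measurable_sets_borel)
    ultimately show ?thesis
      by (simp add: emeasure_pullback_prob)
  qed
  also have "\<dots> = emeasure \<nu> B"
    using B \<nu>_prob by (simp add: borel_prob_def)
  finally show "emeasure (distr (pullback \<mu> \<nu>) borel p) B = emeasure \<nu> B" .
qed

end

lemma nn_integral_comp_mult_indicator:
  fixes p :: "'a::topological_space \<Rightarrow> 'b::t1_space"
  assumes "p \<in> borel_measurable borel" and "sets M = sets borel"
    and "distr M borel p = return borel y" and "A \<in> sets borel"
  shows "(\<integral>\<^sup>+ x. \<rho> (p x) * indicator A x \<partial>M) = \<rho> y * emeasure M A"
proof -
  have "AE x in M. \<rho> (p x) * indicator A x = \<rho> y * indicator A x"
    using AE_eq_if_distr_eq_return[OF assms(1-3)] by eventually_elim simp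
  then have "(\<integral>\<^sup>+ x. \<rho> (p x) * indicator A x \<partial>M) = (\<integral>\<^sup>+ x. \<rho> y * indicator A x \<partial>M)"
    by (rule nn_integral_cong_AE)
  also have "\<dots> = \<rho> y * emeasure M A"
    using assms(2,4) by (simp add: nn_integral_cmult_indicator)
  finally show ?thesis .
qed

lemma pullback_density:
  fixes m :: "'a::topological_space measure" and p :: "'a \<Rightarrow> 'b::t1_space"
    and \<rho> :: "'b \<Rightarrow> ennreal"
  assumes disint: "disintegration m p \<mu>" and m: "sets m = sets borel"
    and p: "p \<in> borel_measurable borel" and concentrated: "\<And>y. distr (\<mu> y) borel p = return borel y"
    and \<rho>: "\<rho> \<in> borel_measurable borel"
  shows "pullback \<mu> (density (quotient_measure m p) \<rho>) = density m (\<rho> \<circ> p)"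
proof -
  define ms where "ms = quotient_measure m p"
  have ms: "sets ms = sets borel"
    by (simp add: ms_def quotient_measure_def)
  have \<mu>: "\<And>y. borel_prob (\<mu> y)"
    and \<mu>_measurable: "\<And>A. A \<in> sets borel \<Longrightarrow> (\<lambda>y. emeasure (\<mu> y) A) \<in> borel_measurable borel"
    using disint unfolding disintegration_def by auto
  have \<mu>_sets: "\<And>y. sets (\<mu> y) = sets borel"
    using \<mu> by (simp add: borel_prob_def)
  have \<rho>_ms: "\<rho> \<in> borel_measurable ms"
    using \<rho> measurable_cong_sets[OF ms refl] by blast
  have \<rho>_p: "\<rho> \<circ> p \<in> borel_measurable m"
    using measurable_comp[OF p \<rho>] measurable_cong_sets[OF m refl] by blast
  have "pullback \<mu> (density ms \<rho>) = density m (\<rho> \<circ> p)"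
  proof (rule measure_eqI)
    show "sets (pullback \<mu> (density ms \<rho>)) = sets (density m (\<rho> \<circ> p))"
      by (simp add: sets_pullback m)
    fix A assume "A \<in> sets (pullback \<mu> (density ms \<rho>))"
    then have A: "A \<in> sets borel"
      by (simp add: sets_pullback)
    have "emeasure (pullback \<mu> (density ms \<rho>)) A = (\<integral>\<^sup>+ y. emeasure (\<mu> y) A \<partial>density ms \<rho>)"
      using ms A by (simp add: emeasure_pullback[OF \<mu> \<mu>_measurable])
    also have "\<dots> = (\<integral>\<^sup>+ y. \<rho> y * emeasure (\<mu> y) A \<partial>ms)"
      using \<mu>_measurable[OF A] measurable_cong_sets[OF ms refl]
      by (intro nn_integral_density[OF \<rho>_ms]) blast
    also have "\<dots> = (\<integral>\<^sup>+ y. (\<integral>\<^sup>+ x. \<rho> (p x) * indicator A x \<partial>\<mu> y) \<partial>ms)"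
      by (simp only: nn_integral_comp_mult_indicator[OF p \<mu>_sets concentrated A])
    also have "\<dots> = (\<integral>\<^sup>+ x. \<rho> (p x) * indicator A x \<partial>bind ms \<mu>)"
    proof (rule nn_integral_bind[symmetric])
      show "(\<lambda>x. \<rho> (p x) * indicator A x) \<in> borel_measurable borel"
        using \<rho> p A by measurable
      show "\<mu> \<in> measurable ms (subprob_algebra borel)"
        by (rule kernel_measurable_subprob_algebra[OF \<mu> \<mu>_measurable ms])
    qed
    also have "\<dots> = emeasure (density m (\<rho> \<circ> p)) A"
      using emeasure_density[OF \<rho>_p, of A] disintegration_eq_bind[OF disint m, folded ms_def] m A
      by simp
    finally show "emeasure (pullback \<mu> (density ms \<rho>)) A = emeasure (density m (\<rho> \<circ> p)) A" .
  qed
  then show ?thesis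
    by (simp add: ms_def)
qed

lemma sigma_finite_mm_space:
  fixes m :: "'a::metric_space measure"
  assumes "mm_space m"
  shows "sigma_finite_measure m"
proof
  fix x\<^sub>0 :: 'a
  have m: "sets m = sets borel" and finite: "\<And>r. r > 0 \<Longrightarrow> emeasure m (ball x\<^sub>0 r) < \<infinity>"
    using assms unfolding mm_space_def by auto
  have "x \<in> (\<Union>n::nat. ball x\<^sub>0 (Suc n))" for x
  proof -
    obtain n :: nat where "dist x\<^sub>0 x < n"
      using reals_Archimedean2 by blast
    then show ?thesis
      by (intro UN_I[of n]) auto
  qed
  then have "(\<Union>n::nat. ball x\<^sub>0 (Suc n)) = UNIV"
    by blast
  moreover have "\<forall>n::nat. emeasure m (ball x\<^sub>0 (Suc n)) \<noteq> \<infinity>"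
    using finite by (simp add: less_top)
  ultimately show "\<exists>A. countable A \<and> A \<subseteq> sets m \<and> \<Union>A = space m \<and> (\<forall>a\<in>A. emeasure m a \<noteq> \<infinity>)"
    using m sets_eq_borel_imp_space_UNIV[OF m]
    by (intro exI[of _ "range (\<lambda>n::nat. ball x\<^sub>0 (Suc n))"]) auto
qed

lemma sigma_finite_if_locally_finite_dense:
  fixes M :: "'b::metric_space measure" and D :: "'b set"
  assumes "locally_finite_measure M" and M: "sets M = sets borel"
    and D: "countable D" "\<And>U. open U \<Longrightarrow> U \<noteq> {} \<Longrightarrow> \<exists>d\<in>D. d \<in> U"
  shows "sigma_finite_measure M"
proof
  define C where "C = {ball d (real_of_rat q) | d q. d \<in> D \<and> emeasure M (ball d (real_of_rat q)) < \<infinity>}"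
  have "C \<subseteq> (\<lambda>(d, q). ball d (real_of_rat q)) ` (D \<times> (UNIV :: rat set))"
    unfolding C_def by auto
  moreover have "countable ((\<lambda>(d, q). ball d (real_of_rat q)) ` (D \<times> (UNIV :: rat set)))"
    using D(1) by simp
  ultimately have "countable C"
    by (rule countable_subset)
  moreover have "\<Union>C = space M"
  proof -
    have "y \<in> \<Union>C" for y
    proof -
      obtain r where r: "r > 0" "emeasure M (ball y r) < \<infinity>"
        using assms(1) unfolding locally_finite_measure_def by blast
      obtain d where d: "d \<in> D" "dist y d < r / 3"
        using D(2)[of "ball y (r / 3)"] r by auto
      obtain q :: rat where q: "r / 3 < real_of_rat q" "real_of_rat q < 2 * r / 3"
        using of_rat_dense[of "r / 3" "2 * r / 3"] r by auto
      have sub: "ball d (real_of_rat q) \<subseteq> ball y r"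
      proof
        fix z assume "z \<in> ball d (real_of_rat q)"
        then have "dist d z < real_of_rat q" by simp
        then show "z \<in> ball y r"
          using dist_triangle[of y z d] d q by simp
      qed
      have "emeasure M (ball d (real_of_rat q)) < \<infinity>"
        using emeasure_mono[OF sub, of M] r(2) M by (simp add: le_less_trans)
      moreover have "y \<in> ball d (real_of_rat q)"
        using d q by (simp add: dist_commute)
      ultimately show ?thesis
        using d(1) unfolding C_def by blast
    qed
    then show ?thesis
      using sets_eq_borel_imp_space_UNIV[OF M] by blast
  qed
  moreover have "C \<subseteq> sets M"
    unfolding M C_def by (blast intro: borel_open open_ball)
  moreover have "\<forall>a\<in>C. emeasure M a \<noteq> \<infinity>"
    unfolding C_def by fastforce
  ultimately show "\<exists>A. countable A \<and> A \<subseteq> sets M \<and> \<Union>A = space M \<and> (\<forall>a\<in>A. emeasure M a \<noteq> \<infinity>)"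
    by blast
qed

lemma sigma_finite_distr_continuous_surj:
  fixes p :: "'a::second_countable_topology \<Rightarrow> 'b::metric_space"
  assumes "continuous_on UNIV p" and "surj p" and "locally_finite_measure (distr m borel p)"
  shows "sigma_finite_measure (distr m borel p)"
proof -
  obtain D :: "'a set" where D: "countable D" "\<And>X. open X \<Longrightarrow> X \<noteq> {} \<Longrightarrow> \<exists>d\<in>D. d \<in> X"
    by (rule countable_dense_setE) blast
  have "\<exists>d\<in>p ` D. d \<in> U" if U: "open U" "U \<noteq> {}" for U
  proof -
    have "open (p -` U)"
      using U(1) assms(1) by (rule open_vimage)
    moreover obtain x where "p x \<in> U"
      using U(2) assms(2) by (metis ex_in_conv surjD)
    ultimately obtain d where "d \<in> D" "p d \<in> U"
      using D(2)[of "p -` U"] by blast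
    then show ?thesis
      by blast
  qed
  then show ?thesis
    using assms(3) D(1) by (intro sigma_finite_if_locally_finite_dense[where D = "p ` D"]) simp_all
qed

lemma sigma_finite_quotient_measure:
  fixes p :: "'a::polish_space \<Rightarrow> 'b::metric_space"
  assumes "metric_measure_foliation m p"
  shows "sigma_finite_measure (quotient_measure m p)"
proof -
  have foliation: "metric_foliation_quotient p"
    and "locally_finite_measure (quotient_measure m p)"
    using assms unfolding metric_measure_foliation_def by auto
  then show ?thesis
    unfolding quotient_measure_def metric_foliation_quotient_def
    by (intro sigma_finite_distr_continuous_surj continuous_on_metric_foliation_quotient[OF foliation]) auto
qed

lemma ent_trunc_cong_AE:
  assumes "AE x in m. f x = g x"
  shows "ent_trunc m f \<epsilon> = ent_trunc m g \<epsilon>"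
proof -
  have pos: "AE x in m. ennreal (indicator {x. \<epsilon> < f x} x * max 0 (f x * ln (f x))) =
      ennreal (indicator {x. \<epsilon> < g x} x * max 0 (g x * ln (g x)))"
    and neg: "AE x in m. ennreal (indicator {x. \<epsilon> < f x} x * max 0 (- (f x * ln (f x)))) =
      ennreal (indicator {x. \<epsilon> < g x} x * max 0 (- (g x * ln (g x))))"
    using assms by (eventually_elim, simp add: indicator_def)+
  show ?thesis
    unfolding ent_trunc_def nn_integral_cong_AE[OF pos] nn_integral_cong_AE[OF neg] ..
qed

lemma ent_trunc_distr:
  assumes p: "p \<in> measurable m borel" and \<rho>: "\<rho> \<in> borel_measurable borel"
  shows "ent_trunc (distr m borel p) \<rho> \<epsilon> = ent_trunc m (\<lambda>x. \<rho> (p x)) \<epsilon>"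
proof -
  have distr: "(\<integral>\<^sup>+ y. g (\<rho> y) \<partial>distr m borel p) = (\<integral>\<^sup>+ x. g (\<rho> (p x)) \<partial>m)"
    if "g \<in> borel_measurable borel" for g :: "real \<Rightarrow> ennreal"
    by (rule nn_integral_distr[OF p])
       (simp add: measurable_compose[OF \<rho> that] measurable_cong_sets[OF sets_distr refl])
  have pos: "(\<lambda>t. ennreal (indicator {t. \<epsilon> < t} t * max 0 (t * ln t))) \<in> borel_measurable borel"
    and neg: "(\<lambda>t. ennreal (indicator {t. \<epsilon> < t} t * max 0 (- (t * ln t)))) \<in> borel_measurable borel"
    by measurable
  show ?thesis
    unfolding ent_trunc_def using distr[OF pos] distr[OF neg] by (simp add: indicator_def)
qed

text \<open>The density picked by \<open>SOME\<close> in \<^const>\<open>rel_entropy\<close> is irrelevant, since densities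
  with respect to a \<open>\<sigma>\<close>-finite measure agree almost everywhere.\<close>

lemma rel_entropy_eq_Lim_ent_trunc:
  assumes "sigma_finite_measure M" and \<rho>: "is_density_of M \<nu> \<rho>"
  shows "rel_entropy M \<nu> = Lim (at_right 0) (ent_trunc M \<rho>)"
proof -
  interpret sigma_finite_measure M by fact
  define \<sigma> where "\<sigma> = (SOME \<sigma>. is_density_of M \<nu> \<sigma>)"
  have \<sigma>: "is_density_of M \<nu> \<sigma>"
    unfolding \<sigma>_def using \<rho> by (rule someI[where P = "is_density_of M \<nu>"])
  have "AE x in M. ennreal (\<sigma> x) = ennreal (\<rho> x)"
    using \<sigma> \<rho> unfolding is_density_of_def by (intro density_unique) auto
  then have "AE x in M. \<sigma> x = \<rho> x"
    using \<sigma> \<rho> unfolding is_density_of_def by auto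
  then have "ent_trunc M \<sigma> = ent_trunc M \<rho>"
    by (intro ext ent_trunc_cong_AE)
  then show ?thesis
    using \<rho> unfolding rel_entropy_def \<sigma>_def by auto
qed

lemma is_density_of_RN_deriv:
  assumes "sigma_finite_measure M" and "sigma_finite_measure \<nu>"
    and "absolutely_continuous M \<nu>" and "sets \<nu> = sets M"
  shows "is_density_of M \<nu> (\<lambda>x. enn2real (RN_deriv M \<nu> x))"
  unfolding is_density_of_def
proof (intro conjI allI)
  interpret sigma_finite_measure M by fact
  show "(\<lambda>x. enn2real (RN_deriv M \<nu> x)) \<in> borel_measurable M"
    by measurable
  show "0 \<le> enn2real (RN_deriv M \<nu> x)" for x
    by simp
  have "density M (\<lambda>x. ennreal (enn2real (RN_deriv M \<nu> x))) = density M (RN_deriv M \<nu>)"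
    using RN_deriv_finite[OF assms(2-4)] by (intro density_cong) (auto simp: less_top)
  then show "\<nu> = density M (\<lambda>x. ennreal (enn2real (RN_deriv M \<nu> x)))"
    using density_RN_deriv[OF assms(3,4)] by simp
qed

lemma rel_entropy_pullback:
  fixes m :: "'a::topological_space measure" and p :: "'a \<Rightarrow> 'b::t1_space"
  assumes disint: "disintegration m p \<mu>" and m: "sets m = sets borel"
    and p: "p \<in> borel_measurable borel" and concentrated: "\<And>y. distr (\<mu> y) borel p = return borel y"
    and "sigma_finite_measure m" and "sigma_finite_measure (quotient_measure m p)"
    and "prob_space \<nu>" and "absolutely_continuous (quotient_measure m p) \<nu>"
    and \<nu>: "sets \<nu> = sets borel"
  shows "rel_entropy (quotient_measure m p) \<nu> = rel_entropy m (pullback \<mu> \<nu>)"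
proof -
  define ms where "ms = quotient_measure m p"
  have ms: "sets ms = sets borel"
    by (simp add: ms_def quotient_measure_def)
  define \<rho> where "\<rho> = (\<lambda>y. enn2real (RN_deriv ms \<nu> y))"
  have \<rho>: "is_density_of ms \<nu> \<rho>"
    unfolding \<rho>_def using ms \<nu>
    by (intro is_density_of_RN_deriv[OF assms(6)[folded ms_def] prob_space_imp_sigma_finite[OF assms(7)]
        assms(8)[folded ms_def]]) simp
  then have \<rho>_borel: "\<rho> \<in> borel_measurable borel" and \<rho>_nonneg: "\<And>y. 0 \<le> \<rho> y"
    and \<nu>_density: "\<nu> = density ms (\<lambda>y. ennreal (\<rho> y))"
    using measurable_cong_sets[OF ms refl] unfolding is_density_of_def by auto
  have p_m: "p \<in> measurable m borel"
    using p measurable_cong_sets[OF m refl] by blast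
  have "pullback \<mu> \<nu> = density m (\<lambda>x. ennreal (\<rho> (p x)))"
    using pullback_density[OF disint m p concentrated, of "\<lambda>y. ennreal (\<rho> y)"] \<rho>_borel \<nu>_density
    by (simp add: ms_def comp_def)
  then have "is_density_of m (pullback \<mu> \<nu>) (\<lambda>x. \<rho> (p x))"
    unfolding is_density_of_def using \<rho>_nonneg measurable_comp[OF p_m \<rho>_borel]
    by (simp add: comp_def)
  then have "rel_entropy m (pullback \<mu> \<nu>) = Lim (at_right 0) (ent_trunc m (\<lambda>x. \<rho> (p x)))"
    by (rule rel_entropy_eq_Lim_ent_trunc[OF assms(5)])
  also have "ent_trunc m (\<lambda>x. \<rho> (p x)) = ent_trunc ms \<rho>"
    unfolding ms_def quotient_measure_def by (intro ext) (simp add: ent_trunc_distr[OF p_m \<rho>_borel])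
  also have "Lim (at_right 0) (ent_trunc ms \<rho>) = rel_entropy ms \<nu>"
    using rel_entropy_eq_Lim_ent_trunc[OF assms(6)[folded ms_def] \<rho>] by simp
  finally show ?thesis
    by (simp add: ms_def)
qed

theorem proposition3p20:
  fixes m :: "'a::polish_space measure" and p :: "'a \<Rightarrow> 'b::metric_space"
    and \<mu> :: "'b \<Rightarrow> 'a measure" and \<nu> :: "'b measure"
  assumes "mm_space m"
    and "metric_measure_foliation m p"
    and "canonical_disintegration m p \<mu>"
    and "borel_prob \<nu>"
  shows "borel_prob (pullback \<mu> \<nu>) \<and>
         distr (pullback \<mu> \<nu>) borel p = \<nu> \<and>
         (\<forall>\<rho>::'b \<Rightarrow> ennreal. \<rho> \<in> borel_measurable borel \<longrightarrow>
            \<nu> = density (quotient_measure m p) \<rho> \<longrightarrow>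
            pullback \<mu> \<nu> = density m (\<rho> \<circ> p)) \<and>
         (absolutely_continuous (quotient_measure m p) \<nu> \<longrightarrow>
            rel_entropy (quotient_measure m p) \<nu> = rel_entropy m (pullback \<mu> \<nu>))"
proof -
  have disint: "disintegration m p \<mu>" and concentrated: "\<And>y. distr (\<mu> y) borel p = return borel y"
    using assms(3) unfolding canonical_disintegration_def by auto
  then have \<mu>: "\<And>y. borel_prob (\<mu> y)"
    and \<mu>_measurable: "\<And>A. A \<in> sets borel \<Longrightarrow> (\<lambda>y. emeasure (\<mu> y) A) \<in> borel_measurable borel"
    unfolding disintegration_def by auto
  have p: "p \<in> borel_measurable borel"
    using assms(2) borel_measurable_metric_foliation_quotient
    unfolding metric_measure_foliation_def by blast
  have m: "sets m = sets borel"
    using assms(1) unfolding mm_space_def by auto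
  have \<nu>: "prob_space \<nu>" "sets \<nu> = sets borel"
    using assms(4) unfolding borel_prob_def by auto
  show ?thesis
  proof (intro conjI allI impI)
    show "borel_prob (pullback \<mu> \<nu>)"
      by (rule borel_prob_pullback[OF \<mu> \<mu>_measurable assms(4)])
    show "distr (pullback \<mu> \<nu>) borel p = \<nu>"
      by (rule distr_pullback[OF \<mu> \<mu>_measurable assms(4) p concentrated])
  next
    fix \<rho> :: "'b \<Rightarrow> ennreal"
    assume \<rho>: "\<rho> \<in> borel_measurable borel" and \<nu>_density: "\<nu> = density (quotient_measure m p) \<rho>"
    show "pullback \<mu> \<nu> = density m (\<rho> \<circ> p)"
      unfolding \<nu>_density by (rule pullback_density[OF disint m p concentrated \<rho>])
  next
    assume "absolutely_continuous (quotient_measure m p) \<nu>"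
    then show "rel_entropy (quotient_measure m p) \<nu> = rel_entropy m (pullback \<mu> \<nu>)"
      by (rule rel_entropy_pullback[OF disint m p concentrated sigma_finite_mm_space[OF assms(1)]
          sigma_finite_quotient_measure[OF assms(2)] \<nu>(1) _ \<nu>(2)])
  qed
qed

end
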